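(* Let $(X,d^X)$ and $(Y,d^Y)$ be compact metric spaces, let $f$ be a homeomorphism of $X$, let $g$ be a homeomorphism of $Y$, and let $h:X\to Y$ be a homeomorphism. Then: (1) $U_f(X)=U_{f^{-1}}(X)$; (2) $U_{h\circ f\circ h^{-1}}(Y)=h(U_f(X))$; (3) for each $k\in\mathbb{Z}$, the set $U_{f^k}(X)$ is invariant under $f$; in particular $U_f(X)$ is invariant under $f$; (4) $U_{f\times g}(X\times Y)=U_f(X)\times U_g(Y)$, where $X\times Y$ carries the maximum metric $D((x_1,y_1),(x_2,y_2))=\max\{d^X(x_1,x_2),d^Y(y_1,y_2)\}$; (5) $M_f(X)=M_{f^{-1}}(X)$; (6) $M_{h\circ f\circ h^{-1}}(Y)=h(M_f(X))$; (7) for each $k\in\mathbb{Z}$, the set $M_{f^k}(X)$ is invariant under $f$; in particular $M_f(X)$ is invariant under $f$.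
   Context: For a homeomorphism $f$ of a compact metric space $(X,d)$: $B(x,\epsilon)=\{y: d(x,y)<\epsilon\}$ and $\mathcal{O}_f(x)=\{f^n(x):n\in\mathbb{Z}\}$. $f$ is expansive on a subset $A\subset X$ with expansivity constant $\mathfrak{c}>0$ if for every pair of distinct $x,y\in A$ there is $n\in\mathbb{Z}$ with $d(f^n(x),f^n(y))>\mathfrak{c}$. A point $x$ is a uniformly expansive point of $f$ if there is $\mathfrak{c}>0$ such that $f$ is expansive on $B(x,\mathfrak{c})$ with expansivity constant $\mathfrak{c}$; $U_f(X)$ denotes the set of uniformly expansive points of $f$. A point $x$ is a minimally expansive point of $f$ if there is $\mathfrak{c}>0$ such that for each $y\in B(x,\mathfrak{c})$, $f$ is expansive on $\overline{\mathcal{O}_f(y)}$ with expansivity constant $\mathfrak{c}$; $M_f(X)$ denotes the set of minimally expansive points of $f$. *)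

theory Defs
  imports "HOL-Analysis.Analysis"
begin

definition compact_metric_space :: "'a set \<Rightarrow> ('a \<Rightarrow> 'a \<Rightarrow> real) \<Rightarrow> bool" where
  "compact_metric_space X d \<longleftrightarrow> Metric_space X d \<and> compact_space (Metric_space.mtopology X d)"

definition mhomeo :: "'a set \<Rightarrow> ('a \<Rightarrow> 'a \<Rightarrow> real) \<Rightarrow> 'b set \<Rightarrow> ('b \<Rightarrow> 'b \<Rightarrow> real) \<Rightarrow> ('a \<Rightarrow> 'b) \<Rightarrow> bool" where
  "mhomeo X d Y e h \<longleftrightarrow> homeomorphic_map (Metric_space.mtopology X d) (Metric_space.mtopology Y e) h"

definition inv_on :: "'a set \<Rightarrow> ('a \<Rightarrow> 'b) \<Rightarrow> 'b \<Rightarrow> 'a" where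
  "inv_on X f = the_inv_into X f"

definition zpow :: "'a set \<Rightarrow> ('a \<Rightarrow> 'a) \<Rightarrow> int \<Rightarrow> 'a \<Rightarrow> 'a" where
  "zpow X f n = (if 0 \<le> n then f ^^ nat n else inv_on X f ^^ nat (- n))"

definition oball :: "'a set \<Rightarrow> ('a \<Rightarrow> 'a \<Rightarrow> real) \<Rightarrow> 'a \<Rightarrow> real \<Rightarrow> 'a set" where
  "oball X d x r = {y \<in> X. d x y < r}"

definition orbit :: "'a set \<Rightarrow> ('a \<Rightarrow> 'a) \<Rightarrow> 'a \<Rightarrow> 'a set" where
  "orbit X f x = {zpow X f n x | n. True}"

definition expansive_on :: "'a set \<Rightarrow> ('a \<Rightarrow> 'a \<Rightarrow> real) \<Rightarrow> ('a \<Rightarrow> 'a) \<Rightarrow> 'a set \<Rightarrow> real \<Rightarrow> bool" where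
  "expansive_on X d f A c \<longleftrightarrow>
     (\<forall>x\<in>A. \<forall>y\<in>A. x \<noteq> y \<longrightarrow> (\<exists>n::int. d (zpow X f n x) (zpow X f n y) > c))"

definition unif_exp_points :: "'a set \<Rightarrow> ('a \<Rightarrow> 'a \<Rightarrow> real) \<Rightarrow> ('a \<Rightarrow> 'a) \<Rightarrow> 'a set" where
  "unif_exp_points X d f = {x \<in> X. \<exists>c>0. expansive_on X d f (oball X d x c) c}"

definition min_exp_points :: "'a set \<Rightarrow> ('a \<Rightarrow> 'a \<Rightarrow> real) \<Rightarrow> ('a \<Rightarrow> 'a) \<Rightarrow> 'a set" where
  "min_exp_points X d f = {x \<in> X. \<exists>c>0. \<forall>y \<in> oball X d x c.
      expansive_on X d f (Metric_space.mtopology X d closure_of orbit X f y) c}"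

definition max_dist :: "('a \<Rightarrow> 'a \<Rightarrow> real) \<Rightarrow> ('b \<Rightarrow> 'b \<Rightarrow> real) \<Rightarrow> 'a \<times> 'b \<Rightarrow> 'a \<times> 'b \<Rightarrow> real" where
  "max_dist d e p q = max (d (fst p) (fst q)) (e (snd p) (snd q))"

end

theory Submission
  imports Defs
begin

(* The iterates of the inverse are those of f with time reversed, and the inverse has
   the same orbits as f; this gives (1) and (5).
   A homeomorphism h between compact metric spaces that intertwines F with G carries
   iterates to iterates and orbit closures to orbit closures, and its inverse is
   uniformly continuous. If \<delta> is a modulus of uniform continuity of the inverse for
   the tolerance c, then pairs whose F-orbits get more than c apart have G-orbits
   getting at least \<delta> apart, so an expansivity constant c on the c-ball around x
   gives the constant \<delta>/2 on the (\<delta>/2)-ball around h x. Applied to h and to its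
   inverse this gives (2) and (6). Since f commutes with each f^k, f intertwines f^k
   with itself, so (3) and (7) are instances of (2) and (6). For (4), a ball for the
   maximum metric is the product of the coordinate balls, and two distinct points of
   the product are separated as soon as one pair of coordinates is. *)

lemma bij_betw_inv_on: "bij_betw h X Y \<Longrightarrow> bij_betw (inv_on X h) Y X"
  unfolding inv_on_def by (rule bij_betw_the_inv_into)

lemma inv_on_into: "bij_betw h X Y \<Longrightarrow> y \<in> Y \<Longrightarrow> inv_on X h y \<in> X"
  by (meson bij_betwE bij_betw_inv_on)

lemma f_inv_on_f: "bij_betw h X Y \<Longrightarrow> y \<in> Y \<Longrightarrow> h (inv_on X h y) = y"
  unfolding inv_on_def bij_betw_def by (metis f_the_inv_into_f)

lemma inv_on_f_f: "bij_betw h X Y \<Longrightarrow> x \<in> X \<Longrightarrow> inv_on X h (h x) = x"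
  unfolding inv_on_def bij_betw_def by (metis the_inv_into_f_f)

lemma inv_on_f_eq:
  assumes "bij_betw h X Y" "x \<in> X" "h x = y"
  shows "inv_on X h y = x"
  using inv_on_f_f[OF assms(1,2)] assms(3) by simp

lemma inv_on_inv_on:
  assumes "bij_betw h X Y" "x \<in> X"
  shows "inv_on Y (inv_on X h) x = h x"
  by (rule inv_on_f_eq[OF bij_betw_inv_on[OF assms(1)] bij_betw_apply[OF assms]])
     (rule inv_on_f_f[OF assms])

lemma subset_image_if_inv_on_image_subset:
  assumes h: "bij_betw h X Y" and A: "A \<subseteq> Y" and "inv_on X h ` A \<subseteq> B"
  shows "A \<subseteq> h ` B"
proof
  fix y assume "y \<in> A"
  then show "y \<in> h ` B"
    using f_inv_on_f[OF h, of y] A assms(3) by (metis image_eqI image_subset_iff subsetD)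
qed

lemma zpow_0 [simp]: "zpow X F 0 = id"
  by (simp add: zpow_def)

lemma zpow_1 [simp]: "zpow X F 1 = F"
  by (simp add: zpow_def)

lemma zpow_into:
  assumes F: "bij_betw F X X" and x: "x \<in> X"
  shows "zpow X F n x \<in> X"
proof -
  have "(H ^^ m) x \<in> X" if "H ` X \<subseteq> X" for H m
    by (induction m) (use that x in auto)
  moreover have "F ` X \<subseteq> X" "inv_on X F ` X \<subseteq> X"
    using F inv_on_into[OF F] by (auto simp: bij_betw_def)
  ultimately show ?thesis
    by (simp add: zpow_def)
qed

lemma zpow_succ:
  assumes F: "bij_betw F X X" and x: "x \<in> X"
  shows "zpow X F (n + 1) x = F (zpow X F n x)"
proof (cases "0 \<le> n")
  case True
  then have "nat (n + 1) = Suc (nat n)"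
    by simp
  with True show ?thesis
    by (simp add: zpow_def)
next
  case False
  then have "nat (- n) = Suc (nat (- (n + 1)))"
    by simp
  with False have "zpow X F n x = inv_on X F (zpow X F (n + 1) x)"
    by (simp add: zpow_def)
  then show ?thesis
    using f_inv_on_f[OF F zpow_into[OF F x]] by simp
qed

lemma zpow_pred:
  assumes F: "bij_betw F X X" and x: "x \<in> X"
  shows "zpow X F (n - 1) x = inv_on X F (zpow X F n x)"
  using zpow_succ[OF F x, of "n - 1"] inv_on_f_f[OF F zpow_into[OF F x]] by simp

lemma zpow_add:
  assumes F: "bij_betw F X X" and x: "x \<in> X"
  shows "zpow X F (m + n) x = zpow X F m (zpow X F n x)"
proof (induction m rule: int_induct[where k = 0])
  case base
  show ?case by simp
next
  case (step1 i)
  then show ?case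
    using zpow_succ[OF F x, of "i + n"] zpow_succ[OF F zpow_into[OF F x], of i]
    by (simp add: add.commute add.left_commute)
next
  case (step2 i)
  then show ?case
    using zpow_pred[OF F x, of "i + n"] zpow_pred[OF F zpow_into[OF F x], of i]
    by (simp add: algebra_simps)
qed

lemma zpow_commute:
  assumes F: "bij_betw F X X" and x: "x \<in> X"
  shows "zpow X F k (F x) = F (zpow X F k x)"
  using zpow_add[OF F x, of k 1] zpow_add[OF F x, of 1 k] by (simp add: add.commute)

lemma bij_betw_zpow:
  assumes F: "bij_betw F X X"
  shows "bij_betw (zpow X F k) X X"
  by (rule bij_betw_byWitness[where f' = "zpow X F (- k)"])
     (use zpow_add[OF F, of _ "- k" k, symmetric] zpow_add[OF F, of _ k "- k", symmetric]
        zpow_into[OF F] in auto)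

lemma zpow_inv_on:
  assumes F: "bij_betw F X X" and x: "x \<in> X"
  shows "zpow X (inv_on X F) n x = zpow X F (- n) x"
proof (induction n rule: int_induct[where k = 0])
  case base
  show ?case by simp
next
  case (step1 i)
  then show ?case
    using zpow_succ[OF bij_betw_inv_on[OF F] x, of i] zpow_pred[OF F x, of "- i"] by simp
next
  case (step2 i)
  then show ?case
    using zpow_pred[OF bij_betw_inv_on[OF F] x, of i] zpow_succ[OF F x, of "- i"]
      inv_on_inv_on[OF F zpow_into[OF F x, of "- i"]] by simp
qed

definition intertwines_on :: "'a set \<Rightarrow> ('a \<Rightarrow> 'b) \<Rightarrow> ('a \<Rightarrow> 'a) \<Rightarrow> ('b \<Rightarrow> 'b) \<Rightarrow> bool" where
  "intertwines_on X h F G \<longleftrightarrow> (\<forall>x\<in>X. G (h x) = h (F x))"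

lemma intertwines_onD: "intertwines_on X h F G \<Longrightarrow> x \<in> X \<Longrightarrow> G (h x) = h (F x)"
  by (simp add: intertwines_on_def)

lemma intertwined_eq_conj:
  assumes h: "bij_betw h X Y" and y: "y \<in> Y" and hFG: "intertwines_on X h F G"
  shows "G y = h (F (inv_on X h y))"
  using intertwines_onD[OF hFG inv_on_into[OF h y]] f_inv_on_f[OF h y] by simp

lemma bij_betw_intertwined:
  assumes F: "bij_betw F X X" and h: "bij_betw h X Y" and hFG: "intertwines_on X h F G"
  shows "bij_betw G Y Y"
proof -
  have "bij_betw G Y Y = bij_betw (h \<circ> F \<circ> inv_on X h) Y Y"
    by (rule bij_betw_cong) (simp add: intertwined_eq_conj[OF h _ hFG])
  then show ?thesis
    using bij_betw_trans[OF bij_betw_trans[OF bij_betw_inv_on[OF h] F] h] by (simp add: comp_assoc)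
qed

lemma intertwines_on_inv_on:
  assumes F: "bij_betw F X X" and h: "bij_betw h X Y" and hFG: "intertwines_on X h F G"
  shows "intertwines_on Y (inv_on X h) G F"
  unfolding intertwines_on_def
proof
  fix y assume y: "y \<in> Y"
  have "F (inv_on X h y) \<in> X"
    using bij_betw_apply[OF F inv_on_into[OF h y]] .
  then show "F (inv_on X h y) = inv_on X h (G y)"
    using intertwined_eq_conj[OF h y hFG] inv_on_f_f[OF h] by simp
qed

lemma zpow_intertwined:
  assumes F: "bij_betw F X X" and h: "bij_betw h X Y" and hFG: "intertwines_on X h F G"
    and x: "x \<in> X"
  shows "zpow Y G n (h x) = h (zpow X F n x)"
proof (induction n rule: int_induct[where k = 0])
  case base
  show ?case by simp
next
  case (step1 i)
  then show ?case
    using zpow_succ[OF bij_betw_intertwined[OF F h hFG] bij_betw_apply[OF h x], of i]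
      zpow_succ[OF F x, of i] intertwines_onD[OF hFG zpow_into[OF F x]] by simp
next
  case (step2 i)
  have z: "zpow X F (i - 1) x \<in> X"
    by (rule zpow_into[OF F x])
  have "inv_on Y G (h (zpow X F i x)) = h (zpow X F (i - 1) x)"
    by (rule inv_on_f_eq[OF bij_betw_intertwined[OF F h hFG] bij_betw_apply[OF h z]])
       (use intertwines_onD[OF hFG z] zpow_succ[OF F x, of "i - 1"] in simp)
  with step2 show ?case
    using zpow_pred[OF bij_betw_intertwined[OF F h hFG] bij_betw_apply[OF h x], of i] by simp
qed

lemma zpow_map_prod:
  assumes f: "bij_betw f X X" and g: "bij_betw g Y Y" and a: "a \<in> X" and b: "b \<in> Y"
  shows "zpow (X \<times> Y) (map_prod f g) n (a, b) = (zpow X f n a, zpow Y g n b)"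
proof (induction n rule: int_induct[where k = 0])
  case base
  show ?case by simp
next
  case (step1 i)
  then show ?case
    using zpow_succ[OF bij_betw_map_prod[OF f g], of "(a, b)" i] zpow_succ[OF f a, of i]
      zpow_succ[OF g b, of i] a b by simp
next
  case (step2 i)
  have "inv_on (X \<times> Y) (map_prod f g) (zpow X f i a, zpow Y g i b)
      = (zpow X f (i - 1) a, zpow Y g (i - 1) b)"
    by (rule inv_on_f_eq[OF bij_betw_map_prod[OF f g]])
       (use zpow_into[OF f a] zpow_into[OF g b] zpow_succ[OF f a, of "i - 1"]
          zpow_succ[OF g b, of "i - 1"] in simp_all)
  with step2 show ?case
    using zpow_pred[OF bij_betw_map_prod[OF f g], of "(a, b)" i] a b by simp
qed

lemma orbit_eq_range: "orbit X F x = range (\<lambda>n. zpow X F n x)"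
  unfolding orbit_def by auto

lemma orbit_subset:
  assumes "bij_betw F X X" "x \<in> X"
  shows "orbit X F x \<subseteq> X"
  using zpow_into[OF assms] by (auto simp: orbit_eq_range)

lemma orbit_inv_on:
  assumes F: "bij_betw F X X" and x: "x \<in> X"
  shows "orbit X (inv_on X F) x = orbit X F x"
  using image_image[of "\<lambda>n. zpow X F n x" uminus UNIV]
  by (simp add: orbit_eq_range zpow_inv_on[OF F x])

lemma orbit_intertwined:
  assumes F: "bij_betw F X X" and h: "bij_betw h X Y" and hFG: "intertwines_on X h F G"
    and x: "x \<in> X"
  shows "orbit Y G (h x) = h ` orbit X F x"
  by (simp add: orbit_eq_range zpow_intertwined[OF F h hFG x] image_image)

lemma expansive_on_mono:
  assumes "expansive_on X d F B c'" "A \<subseteq> B" "c \<le> c'"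
  shows "expansive_on X d F A c"
  using assms unfolding expansive_on_def by (meson le_less_trans subsetD)

lemma expansive_on_inv_on:
  assumes F: "bij_betw F X X" and A: "A \<subseteq> X"
  shows "expansive_on X d (inv_on X F) A c \<longleftrightarrow> expansive_on X d F A c"
proof -
  have "(\<exists>n. d (zpow X (inv_on X F) n x) (zpow X (inv_on X F) n y) > c)
      \<longleftrightarrow> (\<exists>n. d (zpow X F n x) (zpow X F n y) > c)" if "x \<in> X" "y \<in> X" for x y
  proof -
    have "(\<exists>n. d (zpow X (inv_on X F) n x) (zpow X (inv_on X F) n y) > c)
        \<longleftrightarrow> (\<exists>n. d (zpow X F (- n) x) (zpow X F (- n) y) > c)"
      using that by (simp add: zpow_inv_on[OF F])
    also have "\<dots> \<longleftrightarrow> (\<exists>n. d (zpow X F n x) (zpow X F n y) > c)"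
      by (metis minus_minus)
    finally show ?thesis .
  qed
  with A show ?thesis
    by (simp add: expansive_on_def subset_iff)
qed

lemma expansive_on_intertwined_image:
  assumes F: "bij_betw F X X" and h: "bij_betw h X Y" and hFG: "intertwines_on X h F G"
    and A: "A \<subseteq> X"
    and modulus: "\<And>u v. u \<in> Y \<Longrightarrow> v \<in> Y \<Longrightarrow> dY u v < \<delta> \<Longrightarrow> dX (inv_on X h u) (inv_on X h v) < c"
    and "c' < \<delta>" and exp: "expansive_on X dX F A c"
  shows "expansive_on Y dY G (h ` A) c'"
  unfolding expansive_on_def
proof (intro ballI impI)
  fix u v assume "u \<in> h ` A" "v \<in> h ` A" "u \<noteq> v"
  then obtain a b where ab: "a \<in> A" "b \<in> A" "a \<noteq> b" "u = h a" "v = h b"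
    by blast
  then obtain n where n: "dX (zpow X F n a) (zpow X F n b) > c"
    using exp unfolding expansive_on_def by blast
  have a: "a \<in> X" and b: "b \<in> X"
    using ab A by auto
  have Fa: "zpow X F n a \<in> X" and Fb: "zpow X F n b \<in> X"
    using zpow_into[OF F] a b by auto
  have "\<not> dY (h (zpow X F n a)) (h (zpow X F n b)) < \<delta>"
    using modulus[OF bij_betw_apply[OF h Fa] bij_betw_apply[OF h Fb]] n
      inv_on_f_f[OF h Fa] inv_on_f_f[OF h Fb] by fastforce
  then have "dY (zpow Y G n u) (zpow Y G n v) > c'"
    using \<open>c' < \<delta>\<close> zpow_intertwined[OF F h hFG a] zpow_intertwined[OF F h hFG b] ab by simp
  then show "\<exists>n. dY (zpow Y G n u) (zpow Y G n v) > c'" ..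
qed

lemma oball_subset: "oball X d x r \<subseteq> X"
  by (auto simp: oball_def)

lemma oball_mono: "r \<le> s \<Longrightarrow> oball X d x r \<subseteq> oball X d x s"
  by (auto simp: oball_def)

lemma unif_exp_points_subset: "unif_exp_points X d F \<subseteq> X"
  by (auto simp: unif_exp_points_def)

lemma min_exp_points_subset: "min_exp_points X d F \<subseteq> X"
  by (auto simp: min_exp_points_def)

lemma compact_metric_space_imp_Metric_space: "compact_metric_space X d \<Longrightarrow> Metric_space X d"
  by (simp add: compact_metric_space_def)

lemma mtopology_closure_of_subset:
  "Metric_space X d \<Longrightarrow> Metric_space.mtopology X d closure_of S \<subseteq> X"
  using closure_of_subset_topspace Metric_space.topspace_mtopology by metis

lemma mhomeo_imp_bij_betw:
  assumes "Metric_space X dX" "Metric_space Y dY" "mhomeo X dX Y dY h"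
  shows "bij_betw h X Y"
  using assms homeomorphic_imp_injective_map homeomorphic_imp_surjective_map
  by (fastforce simp: mhomeo_def bij_betw_def Metric_space.topspace_mtopology)

lemma mhomeo_inv_on:
  assumes MX: "Metric_space X dX" and MY: "Metric_space Y dY" and h: "mhomeo X dX Y dY h"
  shows "mhomeo Y dY X dX (inv_on X h)"
proof -
  let ?TX = "Metric_space.mtopology X dX" and ?TY = "Metric_space.mtopology Y dY"
  obtain k where "homeomorphic_maps ?TX ?TY h k"
    using h unfolding mhomeo_def homeomorphic_map_maps by blast
  then have k: "homeomorphic_map ?TY ?TX k" and hk: "\<forall>y\<in>Y. h (k y) = y"
    unfolding homeomorphic_maps_map Metric_space.topspace_mtopology[OF MY] by simp_all
  have kY: "k ` Y = X"
    using homeomorphic_imp_surjective_map[OF k]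
    unfolding Metric_space.topspace_mtopology[OF MX] Metric_space.topspace_mtopology[OF MY] .
  have "inv_on X h y = k y" if "y \<in> Y" for y
    using inv_on_f_eq[OF mhomeo_imp_bij_betw[OF MX MY h] _ bspec[OF hk that]] kY that by blast
  then show ?thesis
    using homeomorphic_map_eq[OF k, of "inv_on X h"]
    by (simp add: mhomeo_def Metric_space.topspace_mtopology[OF MY])
qed

lemma continuous_map_compact_modulus:
  assumes CX: "compact_metric_space X dX" and MY: "Metric_space Y dY"
    and k: "continuous_map (Metric_space.mtopology X dX) (Metric_space.mtopology Y dY) k"
    and "e > 0"
  obtains \<delta> where "\<delta> > 0" "\<And>u v. u \<in> X \<Longrightarrow> v \<in> X \<Longrightarrow> dX u v < \<delta> \<Longrightarrow> dY (k u) (k v) < e"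
proof -
  have MX: "Metric_space X dX"
    by (rule compact_metric_space_imp_Metric_space[OF CX])
  have "uniformly_continuous_map (metric (X, dX)) (metric (Y, dY)) k"
    by (rule continuous_imp_uniformly_continuous_map)
       (use CX k in \<open>simp add: compact_metric_space_def Metric_space.mtopology_of[OF MX]
          Metric_space.mtopology_of[OF MY]\<close>)
  then show ?thesis
    using that \<open>e > 0\<close> unfolding uniformly_continuous_map_def
    by (simp add: Metric_space.mspace_metric[OF MX] Metric_space.mdist_metric[OF MX]
        Metric_space.mdist_metric[OF MY]) metis
qed

lemma mhomeo_inv_on_modulus:
  assumes MX: "Metric_space X dX" and CY: "compact_metric_space Y dY"
    and h: "mhomeo X dX Y dY h" and "c > 0"
  obtains \<delta> where "\<delta> > 0"
    "\<And>u v. u \<in> Y \<Longrightarrow> v \<in> Y \<Longrightarrow> dY u v < \<delta> \<Longrightarrow> dX (inv_on X h u) (inv_on X h v) < c"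
proof -
  have "mhomeo Y dY X dX (inv_on X h)"
    by (rule mhomeo_inv_on[OF MX compact_metric_space_imp_Metric_space[OF CY] h])
  then show ?thesis
    using continuous_map_compact_modulus[OF CY MX _ \<open>c > 0\<close>] that
    by (metis homeomorphic_imp_continuous_map mhomeo_def)
qed

lemma oball_subset_image_if_modulus:
  assumes h: "bij_betw h X Y" and x: "x \<in> X"
    and modulus: "\<And>u v. u \<in> Y \<Longrightarrow> v \<in> Y \<Longrightarrow> dY u v < \<delta> \<Longrightarrow> dX (inv_on X h u) (inv_on X h v) < c"
  shows "oball Y dY (h x) \<delta> \<subseteq> h ` oball X dX x c"
proof
  fix u assume "u \<in> oball Y dY (h x) \<delta>"
  then have u: "u \<in> Y" "dY (h x) u < \<delta>"
    by (auto simp: oball_def)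
  then have "inv_on X h u \<in> oball X dX x c"
    using modulus[OF bij_betw_apply[OF h x]] inv_on_f_f[OF h x] inv_on_into[OF h]
    by (auto simp: oball_def)
  then show "u \<in> h ` oball X dX x c"
    using f_inv_on_f[OF h u(1)] by force
qed

lemma unif_exp_points_inv_on:
  assumes "bij_betw F X X"
  shows "unif_exp_points X d (inv_on X F) = unif_exp_points X d F"
  using expansive_on_inv_on[OF assms oball_subset] by (simp add: unif_exp_points_def)

lemma min_exp_points_inv_on:
  assumes MX: "Metric_space X d" and F: "bij_betw F X X"
  shows "min_exp_points X d (inv_on X F) = min_exp_points X d F"
  using orbit_inv_on[OF F] expansive_on_inv_on[OF F mtopology_closure_of_subset[OF MX]]
  by (simp add: min_exp_points_def oball_def)

lemma unif_exp_points_intertwined_subset: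
  assumes MX: "Metric_space X dX" and CY: "compact_metric_space Y dY"
    and h: "mhomeo X dX Y dY h" and F: "bij_betw F X X" and hFG: "intertwines_on X h F G"
  shows "h ` unif_exp_points X dX F \<subseteq> unif_exp_points Y dY G"
proof
  fix y assume "y \<in> h ` unif_exp_points X dX F"
  then obtain x c where x: "x \<in> X" "y = h x" and "c > 0"
    and exp: "expansive_on X dX F (oball X dX x c) c"
    by (auto simp: unif_exp_points_def)
  have hXY: "bij_betw h X Y"
    by (rule mhomeo_imp_bij_betw[OF MX compact_metric_space_imp_Metric_space[OF CY] h])
  obtain \<delta> where "\<delta> > 0"
    and modulus: "\<And>u v. u \<in> Y \<Longrightarrow> v \<in> Y \<Longrightarrow> dY u v < \<delta> \<Longrightarrow> dX (inv_on X h u) (inv_on X h v) < c"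
    using mhomeo_inv_on_modulus[OF MX CY h \<open>c > 0\<close>] by blast
  have "\<delta> / 2 < \<delta>"
    using \<open>\<delta> > 0\<close> by simp
  with F hXY hFG oball_subset modulus
  have "expansive_on Y dY G (h ` oball X dX x c) (\<delta> / 2)"
    using exp by (rule expansive_on_intertwined_image)
  moreover have "oball Y dY y \<delta> \<subseteq> h ` oball X dX x c"
    unfolding x(2) using hXY x(1) modulus by (rule oball_subset_image_if_modulus)
  moreover have "oball Y dY y (\<delta> / 2) \<subseteq> oball Y dY y \<delta>"
    using \<open>\<delta> / 2 < \<delta>\<close> by (simp add: oball_mono)
  ultimately have "expansive_on Y dY G (oball Y dY y (\<delta> / 2)) (\<delta> / 2)"
    using expansive_on_mono by blast
  moreover have "y \<in> Y" "\<delta> / 2 > 0"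
    using bij_betw_apply[OF hXY x(1)] x(2) \<open>\<delta> > 0\<close> by simp_all
  ultimately show "y \<in> unif_exp_points Y dY G"
    unfolding unif_exp_points_def by blast
qed

lemma min_exp_points_intertwined_subset:
  assumes MX: "Metric_space X dX" and CY: "compact_metric_space Y dY"
    and h: "mhomeo X dX Y dY h" and F: "bij_betw F X X" and hFG: "intertwines_on X h F G"
  shows "h ` min_exp_points X dX F \<subseteq> min_exp_points Y dY G"
proof
  let ?TX = "Metric_space.mtopology X dX" and ?TY = "Metric_space.mtopology Y dY"
  fix y assume "y \<in> h ` min_exp_points X dX F"
  then obtain x c where x: "x \<in> X" "y = h x" and "c > 0"
    and exp: "\<And>z. z \<in> oball X dX x c \<Longrightarrow> expansive_on X dX F (?TX closure_of orbit X F z) c"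
    by (auto simp: min_exp_points_def)
  have MY: "Metric_space Y dY"
    by (rule compact_metric_space_imp_Metric_space[OF CY])
  have hXY: "bij_betw h X Y"
    by (rule mhomeo_imp_bij_betw[OF MX MY h])
  obtain \<delta> where "\<delta> > 0"
    and modulus: "\<And>u v. u \<in> Y \<Longrightarrow> v \<in> Y \<Longrightarrow> dY u v < \<delta> \<Longrightarrow> dX (inv_on X h u) (inv_on X h v) < c"
    using mhomeo_inv_on_modulus[OF MX CY h \<open>c > 0\<close>] by blast
  have ball: "oball Y dY y \<delta> \<subseteq> h ` oball X dX x c"
    unfolding x(2) using hXY x(1) modulus by (rule oball_subset_image_if_modulus)
  have "\<delta> / 2 < \<delta>"
    using \<open>\<delta> > 0\<close> by simp
  have "expansive_on Y dY G (?TY closure_of orbit Y G u) (\<delta> / 2)" if u: "u \<in> oball Y dY y (\<delta> / 2)" for u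
  proof -
    have "u \<in> oball Y dY y \<delta>"
      using oball_mono[of "\<delta> / 2" \<delta> Y dY y] u \<open>\<delta> / 2 < \<delta>\<close> by auto
    then obtain z where z: "z \<in> oball X dX x c" "u = h z"
      using ball by blast
    then have zX: "z \<in> X"
      by (simp add: oball_def)
    have "?TY closure_of orbit Y G u = h ` (?TX closure_of orbit X F z)"
      using orbit_intertwined[OF F hXY hFG zX] z(2) orbit_subset[OF F zX]
        homeomorphic_map_closure_of[OF h[unfolded mhomeo_def]]
      by (simp add: Metric_space.topspace_mtopology[OF MX])
    moreover have "expansive_on Y dY G (h ` (?TX closure_of orbit X F z)) (\<delta> / 2)"
      using F hXY hFG mtopology_closure_of_subset[OF MX] modulus \<open>\<delta> / 2 < \<delta>\<close> exp[OF z(1)]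
      by (rule expansive_on_intertwined_image)
    ultimately show ?thesis
      by simp
  qed
  moreover have "y \<in> Y" "\<delta> / 2 > 0"
    using bij_betw_apply[OF hXY x(1)] x(2) \<open>\<delta> > 0\<close> by simp_all
  ultimately show "y \<in> min_exp_points Y dY G"
    unfolding min_exp_points_def by blast
qed

lemma unif_exp_points_intertwined:
  assumes CX: "compact_metric_space X dX" and CY: "compact_metric_space Y dY"
    and h: "mhomeo X dX Y dY h" and F: "bij_betw F X X" and hFG: "intertwines_on X h F G"
  shows "unif_exp_points Y dY G = h ` unif_exp_points X dX F"
proof
  have MX: "Metric_space X dX" and MY: "Metric_space Y dY"
    using CX CY by (simp_all add: compact_metric_space_imp_Metric_space)
  have hXY: "bij_betw h X Y"
    by (rule mhomeo_imp_bij_betw[OF MX MY h])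
  show "h ` unif_exp_points X dX F \<subseteq> unif_exp_points Y dY G"
    by (rule unif_exp_points_intertwined_subset[OF MX CY h F hFG])
  have "inv_on X h ` unif_exp_points Y dY G \<subseteq> unif_exp_points X dX F"
    by (rule unif_exp_points_intertwined_subset[OF MY CX mhomeo_inv_on[OF MX MY h]
          bij_betw_intertwined[OF F hXY hFG] intertwines_on_inv_on[OF F hXY hFG]])
  then show "unif_exp_points Y dY G \<subseteq> h ` unif_exp_points X dX F"
    by (rule subset_image_if_inv_on_image_subset[OF hXY unif_exp_points_subset])
qed

lemma min_exp_points_intertwined:
  assumes CX: "compact_metric_space X dX" and CY: "compact_metric_space Y dY"
    and h: "mhomeo X dX Y dY h" and F: "bij_betw F X X" and hFG: "intertwines_on X h F G"
  shows "min_exp_points Y dY G = h ` min_exp_points X dX F"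
proof
  have MX: "Metric_space X dX" and MY: "Metric_space Y dY"
    using CX CY by (simp_all add: compact_metric_space_imp_Metric_space)
  have hXY: "bij_betw h X Y"
    by (rule mhomeo_imp_bij_betw[OF MX MY h])
  show "h ` min_exp_points X dX F \<subseteq> min_exp_points Y dY G"
    by (rule min_exp_points_intertwined_subset[OF MX CY h F hFG])
  have "inv_on X h ` min_exp_points Y dY G \<subseteq> min_exp_points X dX F"
    by (rule min_exp_points_intertwined_subset[OF MY CX mhomeo_inv_on[OF MX MY h]
          bij_betw_intertwined[OF F hXY hFG] intertwines_on_inv_on[OF F hXY hFG]])
  then show "min_exp_points Y dY G \<subseteq> h ` min_exp_points X dX F"
    by (rule subset_image_if_inv_on_image_subset[OF hXY min_exp_points_subset])
qed

lemma intertwines_on_zpow_self: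
  "bij_betw F X X \<Longrightarrow> intertwines_on X F (zpow X F k) (zpow X F k)"
  by (simp add: intertwines_on_def zpow_commute)

lemma unif_exp_points_zpow_invariant:
  assumes CX: "compact_metric_space X d" and f: "mhomeo X d X d f"
  shows "f ` unif_exp_points X d (zpow X f k) = unif_exp_points X d (zpow X f k)"
proof -
  have MX: "Metric_space X d"
    by (rule compact_metric_space_imp_Metric_space[OF CX])
  have fX: "bij_betw f X X"
    by (rule mhomeo_imp_bij_betw[OF MX MX f])
  show ?thesis
    using unif_exp_points_intertwined[OF CX CX f bij_betw_zpow[OF fX] intertwines_on_zpow_self[OF fX]]
    by simp
qed

lemma min_exp_points_zpow_invariant:
  assumes CX: "compact_metric_space X d" and f: "mhomeo X d X d f"
  shows "f ` min_exp_points X d (zpow X f k) = min_exp_points X d (zpow X f k)"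
proof -
  have MX: "Metric_space X d"
    by (rule compact_metric_space_imp_Metric_space[OF CX])
  have fX: "bij_betw f X X"
    by (rule mhomeo_imp_bij_betw[OF MX MX f])
  show ?thesis
    using min_exp_points_intertwined[OF CX CX f bij_betw_zpow[OF fX] intertwines_on_zpow_self[OF fX]]
    by simp
qed

lemma oball_max_dist: "oball (X \<times> Y) (max_dist dX dY) (x, y) r = oball X dX x r \<times> oball Y dY y r"
  by (auto simp: oball_def max_dist_def)

lemma expansive_on_map_prod_Times_iff:
  assumes MX: "Metric_space X dX" and MY: "Metric_space Y dY"
    and f: "bij_betw f X X" and g: "bij_betw g Y Y"
    and A: "A \<subseteq> X" "A \<noteq> {}" and B: "B \<subseteq> Y" "B \<noteq> {}" and "c \<ge> 0"
  shows "expansive_on (X \<times> Y) (max_dist dX dY) (map_prod f g) (A \<times> B) c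
     \<longleftrightarrow> expansive_on X dX f A c \<and> expansive_on Y dY g B c"
  (is "?prod \<longleftrightarrow> ?fA \<and> ?gB")
proof -
  let ?D = "\<lambda>n p q. max_dist dX dY (zpow (X \<times> Y) (map_prod f g) n p) (zpow (X \<times> Y) (map_prod f g) n q)"
  have D: "?D n (a, b) (a', b') = max (dX (zpow X f n a) (zpow X f n a')) (dY (zpow Y g n b) (zpow Y g n b'))"
    if "a \<in> A" "a' \<in> A" "b \<in> B" "b' \<in> B" for n a a' b b'
  proof -
    have "a \<in> X" "a' \<in> X" "b \<in> Y" "b' \<in> Y"
      using that A(1) B(1) by auto
    then show ?thesis
      by (simp add: max_dist_def zpow_map_prod[OF f g])
  qed
  have "?fA" if prod: ?prod
    unfolding expansive_on_def
  proof (intro ballI impI)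
    fix a a' assume a: "a \<in> A" "a' \<in> A" "a \<noteq> a'"
    obtain b where b: "b \<in> B"
      using B(2) by blast
    with a obtain n where "?D n (a, b) (a', b) > c"
      using prod unfolding expansive_on_def by blast
    moreover have "dY (zpow Y g n b) (zpow Y g n b) = 0"
      using Metric_space.mdist_zero[OF MY zpow_into[OF g]] b B(1) by blast
    ultimately have "dX (zpow X f n a) (zpow X f n a') > c"
      using D[OF a(1,2) b b] \<open>c \<ge> 0\<close> by (auto simp: less_max_iff_disj)
    then show "\<exists>n. dX (zpow X f n a) (zpow X f n a') > c" ..
  qed
  moreover have "?gB" if prod: ?prod
    unfolding expansive_on_def
  proof (intro ballI impI)
    fix b b' assume b: "b \<in> B" "b' \<in> B" "b \<noteq> b'"
    obtain a where a: "a \<in> A"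
      using A(2) by blast
    with b obtain n where "?D n (a, b) (a, b') > c"
      using prod unfolding expansive_on_def by blast
    moreover have "dX (zpow X f n a) (zpow X f n a) = 0"
      using Metric_space.mdist_zero[OF MX zpow_into[OF f]] a A(1) by blast
    ultimately have "dY (zpow Y g n b) (zpow Y g n b') > c"
      using D[OF a a b(1,2)] \<open>c \<ge> 0\<close> by (auto simp: less_max_iff_disj)
    then show "\<exists>n. dY (zpow Y g n b) (zpow Y g n b') > c" ..
  qed
  moreover have ?prod if fA: ?fA and gB: ?gB
    unfolding expansive_on_def
  proof (intro ballI impI)
    fix p q assume "p \<in> A \<times> B" "q \<in> A \<times> B" "p \<noteq> q"
    then obtain a b a' b' where ab: "p = (a, b)" "q = (a', b')" "a \<in> A" "b \<in> B" "a' \<in> A" "b' \<in> B"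
      by blast
    show "\<exists>n. ?D n p q > c"
    proof (cases "a = a'")
      case False
      then obtain n where "dX (zpow X f n a) (zpow X f n a') > c"
        using fA ab(3,5) unfolding expansive_on_def by blast
      then have "?D n p q > c"
        using D[OF ab(3,5,4,6)] ab(1,2) by (simp add: less_max_iff_disj)
      then show ?thesis ..
    next
      case True
      then have "b \<noteq> b'"
        using \<open>p \<noteq> q\<close> ab(1,2) by simp
      then obtain n where "dY (zpow Y g n b) (zpow Y g n b') > c"
        using gB ab(4,6) unfolding expansive_on_def by blast
      then have "?D n p q > c"
        using D[OF ab(3,5,4,6)] ab(1,2) by (simp add: less_max_iff_disj)
      then show ?thesis ..
    qed
  qed
  ultimately show ?thesis
    by blast
qed

lemma unif_exp_points_map_prod:
  assumes MX: "Metric_space X dX" and MY: "Metric_space Y dY"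
    and f: "bij_betw f X X" and g: "bij_betw g Y Y"
  shows "unif_exp_points (X \<times> Y) (max_dist dX dY) (map_prod f g)
       = unif_exp_points X dX f \<times> unif_exp_points Y dY g"
proof -
  have ball_iff: "expansive_on (X \<times> Y) (max_dist dX dY) (map_prod f g) (oball (X \<times> Y) (max_dist dX dY) (x, y) c) c
      \<longleftrightarrow> expansive_on X dX f (oball X dX x c) c \<and> expansive_on Y dY g (oball Y dY y c) c"
    if "x \<in> X" "y \<in> Y" "c > 0" for x y c
  proof -
    have centres: "x \<in> oball X dX x c" "y \<in> oball Y dY y c"
      using that Metric_space.mdist_zero[OF MX] Metric_space.mdist_zero[OF MY] by (auto simp: oball_def)
    show ?thesis
      unfolding oball_max_dist
      by (rule expansive_on_map_prod_Times_iff[OF MX MY f g oball_subset _ oball_subset])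
         (use centres \<open>c > 0\<close> in auto)
  qed
  have "(x, y) \<in> unif_exp_points (X \<times> Y) (max_dist dX dY) (map_prod f g)
      \<longleftrightarrow> (x, y) \<in> unif_exp_points X dX f \<times> unif_exp_points Y dY g" for x y
  proof
    assume "(x, y) \<in> unif_exp_points (X \<times> Y) (max_dist dX dY) (map_prod f g)"
    then show "(x, y) \<in> unif_exp_points X dX f \<times> unif_exp_points Y dY g"
      using ball_iff by (auto simp: unif_exp_points_def)
  next
    assume "(x, y) \<in> unif_exp_points X dX f \<times> unif_exp_points Y dY g"
    then obtain c1 c2 where xy: "x \<in> X" "y \<in> Y" and "c1 > 0" "c2 > 0"
      and "expansive_on X dX f (oball X dX x c1) c1" "expansive_on Y dY g (oball Y dY y c2) c2"
      by (auto simp: unif_exp_points_def)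
    moreover have "min c1 c2 \<le> c1" "min c1 c2 \<le> c2"
      by simp_all
    ultimately have "expansive_on X dX f (oball X dX x (min c1 c2)) (min c1 c2)"
      "expansive_on Y dY g (oball Y dY y (min c1 c2)) (min c1 c2)"
      by (meson expansive_on_mono oball_mono)+
    moreover have "min c1 c2 > 0"
      using \<open>c1 > 0\<close> \<open>c2 > 0\<close> by simp
    ultimately show "(x, y) \<in> unif_exp_points (X \<times> Y) (max_dist dX dY) (map_prod f g)"
      using ball_iff[OF xy] xy unfolding unif_exp_points_def by blast
  qed
  then show ?thesis
    by auto
qed

theorem proposition2p2:
  fixes X :: "'a set" and dX :: "'a \<Rightarrow> 'a \<Rightarrow> real"
    and Y :: "'b set" and dY :: "'b \<Rightarrow> 'b \<Rightarrow> real"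
    and f :: "'a \<Rightarrow> 'a" and g :: "'b \<Rightarrow> 'b" and h :: "'a \<Rightarrow> 'b"
  assumes "compact_metric_space X dX" and "compact_metric_space Y dY"
    and "mhomeo X dX X dX f" and "mhomeo Y dY Y dY g" and "mhomeo X dX Y dY h"
  shows "(unif_exp_points X dX f = unif_exp_points X dX (inv_on X f))
    \<and> (unif_exp_points Y dY (h \<circ> f \<circ> inv_on X h) = h ` unif_exp_points X dX f)
    \<and> (\<forall>k::int. f ` unif_exp_points X dX (zpow X f k) = unif_exp_points X dX (zpow X f k))
    \<and> (f ` unif_exp_points X dX f = unif_exp_points X dX f)
    \<and> (unif_exp_points (X \<times> Y) (max_dist dX dY) (map_prod f g) = unif_exp_points X dX f \<times> unif_exp_points Y dY g)
    \<and> (min_exp_points X dX f = min_exp_points X dX (inv_on X f))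
    \<and> (min_exp_points Y dY (h \<circ> f \<circ> inv_on X h) = h ` min_exp_points X dX f)
    \<and> (\<forall>k::int. f ` min_exp_points X dX (zpow X f k) = min_exp_points X dX (zpow X f k))
    \<and> (f ` min_exp_points X dX f = min_exp_points X dX f)"
proof -
  have MX: "Metric_space X dX" and MY: "Metric_space Y dY"
    using assms(1,2) by (simp_all add: compact_metric_space_imp_Metric_space)
  have fX: "bij_betw f X X" and gY: "bij_betw g Y Y" and hXY: "bij_betw h X Y"
    using mhomeo_imp_bij_betw MX MY assms(3-5) by blast+
  have hfh: "intertwines_on X h f (h \<circ> f \<circ> inv_on X h)"
    by (simp add: intertwines_on_def inv_on_f_f[OF hXY])
  show ?thesis
    using unif_exp_points_inv_on[OF fX] min_exp_points_inv_on[OF MX fX]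
      unif_exp_points_intertwined[OF assms(1,2,5) fX hfh]
      min_exp_points_intertwined[OF assms(1,2,5) fX hfh]
      unif_exp_points_zpow_invariant[OF assms(1,3)] min_exp_points_zpow_invariant[OF assms(1,3)]
      unif_exp_points_zpow_invariant[OF assms(1,3), of 1] min_exp_points_zpow_invariant[OF assms(1,3), of 1]
      unif_exp_points_map_prod[OF MX MY fX gY]
    by simp
qed

end
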